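(* Let $d\in\mathbb N^*$, $m\in\mathbb R^d$ and $R>0$. There exists an explicit constant $L_R$ (depending on $R$, $d$ and $m$) such that for every $x\in\mathbb R^d$ with $\|x\|\le R$ and every $r\le 1/R$, \[ |\eta(B(x,r))-\eta(x)|\le L_R\,\mu(B(x,r))^{2/d}. \]
   Context: $\gamma(x)=(2\pi)^{-d/2}e^{-\|x\|^2/2}$ is the standard Gaussian density on $\mathbb R^d$ (Euclidean norm $\|\cdot\|$). Gaussian translation model in $\mathbb R^d$: the design distribution is $\mu=\frac12\gamma(\cdot)+\frac12\gamma(\cdot-m)$ and the regression function is $\eta(x)=\frac{\gamma(x)}{\gamma(x)+\gamma(x-m)}$. $B(x,r)$ is the Euclidean ball of center $x$ and radius $r$, and $\eta(B(x,r))=\frac{1}{\mu(B(x,r))}\int_{B(x,r)}\eta\,d\mu$ is the $\mu$-average of $\eta$ on that ball. *)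

theory Defs
  imports "HOL-Analysis.Analysis"
begin

definition gauss :: "'a::euclidean_space \<Rightarrow> real" where
  "gauss x = (2 * pi) powr (- real DIM('a) / 2) * exp (- ((norm x)\<^sup>2) / 2)"

definition design_measure :: "'a::euclidean_space \<Rightarrow> 'a measure" where
  "design_measure m = density lborel (\<lambda>y. ennreal (gauss y / 2 + gauss (y - m) / 2))"

definition eta :: "'a::euclidean_space \<Rightarrow> 'a \<Rightarrow> real" where
  "eta m x = gauss x / (gauss x + gauss (x - m))"

definition eta_ball :: "'a::euclidean_space \<Rightarrow> 'a \<Rightarrow> real \<Rightarrow> real" where
  "eta_ball m x r = (1 / measure (design_measure m) (ball x r)) *
      (\<integral>y\<in>ball x r. eta m y \<partial>(design_measure m))"

end

(*
  Write the design distribution as mu = f * lebesgue with f = (gamma + gamma(. - m)) / 2, so that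
  eta * f = gamma / 2 and eta(B(x,r)) - eta(x) = integral over B of (eta - eta(x)) f, divided by mu(B).
  Pairing y = x + h with its reflection x - h kills the first-order terms: the symmetrised integrand
  is A (rho_x(h) - rho_(x-m)(h)) with A = gamma(x) gamma(x-m) / (gamma(x) + gamma(x-m)) and
  rho_z(h) = (gamma(z+h) + gamma(z-h)) / (2 gamma(z)) = exp(-|h|^2/2) cosh(z.h) = 1 + O(|h|^2).
  Hence the numerator is O(r^2 vol(B)), while mu(B) >= c vol(B) with c a lower bound of gamma / 2 on the ball
  of radius R + 1/R. Finally vol(B) = omega r^d <= mu(B) / c converts r^2 into mu(B)^(2/d).
*)
theory Submission
  imports Defs
begin

lemma cosh_sub_one_le:
  fixes t T :: real
  assumes "\<bar>t\<bar> \<le> T"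
  shows "cosh t - 1 \<le> exp T * t\<^sup>2 / 2"
proof -
  obtain a where a: "\<bar>a\<bar> \<le> \<bar>t\<bar>" "exp t = (\<Sum>m<2. t ^ m / fact m) + exp a / fact 2 * t ^ 2"
    using Maclaurin_exp_le[of t 2] by blast
  obtain b where b: "\<bar>b\<bar> \<le> \<bar>t\<bar>" "exp (- t) = (\<Sum>m<2. (- t) ^ m / fact m) + exp b / fact 2 * (- t) ^ 2"
    using Maclaurin_exp_le[of "- t" 2] by auto
  have "exp a + exp b \<le> exp T + exp T"
    using a(1) b(1) assms by (intro add_mono) auto
  then have "(exp a + exp b) / 4 \<le> exp T / 2"
    by (simp add: field_simps)
  then have "(exp a + exp b) / 4 * t\<^sup>2 \<le> exp T / 2 * t\<^sup>2"
    by (rule mult_right_mono) simp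
  moreover have "cosh t - 1 = (exp a + exp b) / 4 * t\<^sup>2"
    unfolding cosh_field_def a(2) b(2) by (simp add: numeral_2_eq_2 field_simps)
  ultimately show ?thesis by simp
qed

lemma abs_exp_neg_mult_cosh_sub_one_le:
  fixes s t T :: real
  assumes "0 \<le> s" "\<bar>t\<bar> \<le> T"
  shows "\<bar>exp (- s) * cosh t - 1\<bar> \<le> exp T * t\<^sup>2 / 2 + s"
proof -
  have "exp (- s) * cosh t \<le> cosh t"
    using assms cosh_real_ge_1[of t] by (simp add: mult_left_le_one_le)
  moreover have "1 - s \<le> exp (- s) * cosh t"
  proof -
    have "exp (- s) * 1 \<le> exp (- s) * cosh t"
      by (rule mult_left_mono) (simp_all add: cosh_real_ge_1)
    then show ?thesis
      using exp_ge_add_one_self[of "- s"] by linarith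
  qed
  moreover have "0 \<le> exp T * t\<^sup>2 / 2"
    by simp
  ultimately show ?thesis
    using cosh_sub_one_le[OF assms(2)] assms(1) by (simp only: abs_le_iff) (intro conjI; linarith)
qed

lemma gauss_pos: "0 < gauss x"
  unfolding gauss_def by simp

lemma gauss_le: "gauss (x :: 'a::euclidean_space) \<le> (2 * pi) powr (- real DIM('a) / 2)"
  unfolding gauss_def by simp

lemma gauss_ge:
  fixes y :: "'a::euclidean_space"
  assumes "norm y \<le> \<rho>"
  shows "(2 * pi) powr (- real DIM('a) / 2) * exp (- \<rho>\<^sup>2 / 2) \<le> gauss y"
proof -
  have "(norm y)\<^sup>2 \<le> \<rho>\<^sup>2"
    using assms by (intro power_mono) auto
  then show ?thesis
    unfolding gauss_def by simp
qed

lemma gauss_add_plus_gauss_diff: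
  fixes z h :: "'a::euclidean_space"
  shows "gauss (z + h) + gauss (z - h) = 2 * gauss z * (exp (- (norm h)\<^sup>2 / 2) * cosh (z \<bullet> h))"
proof -
  have "(norm (z + h))\<^sup>2 = (norm z)\<^sup>2 + (norm h)\<^sup>2 + 2 * (z \<bullet> h)"
    by (simp add: power2_norm_eq_inner inner_add_left inner_add_right inner_commute)
  then have plus: "exp (- (norm (z + h))\<^sup>2 / 2) = exp (- (norm z)\<^sup>2 / 2) * exp (- (norm h)\<^sup>2 / 2) * exp (- (z \<bullet> h))"
    by (simp add: exp_add[symmetric] exp_diff field_simps)
  have "(norm (z - h))\<^sup>2 = (norm z)\<^sup>2 + (norm h)\<^sup>2 - 2 * (z \<bullet> h)"
    by (simp add: power2_norm_eq_inner inner_diff_left inner_diff_right inner_commute)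
  then have minus: "exp (- (norm (z - h))\<^sup>2 / 2) = exp (- (norm z)\<^sup>2 / 2) * exp (- (norm h)\<^sup>2 / 2) * exp (z \<bullet> h)"
    by (simp add: exp_add[symmetric] exp_diff field_simps)
  show ?thesis
    unfolding gauss_def plus minus cosh_field_def by (simp add: algebra_simps)
qed

lemma gauss_symmetric_ratio_le:
  fixes z h :: "'a::euclidean_space"
  assumes "norm z \<le> K" "K * norm h \<le> T"
  shows "\<bar>(gauss (z + h) + gauss (z - h)) / (2 * gauss z) - 1\<bar> \<le> (exp T * K\<^sup>2 + 1) * (norm h)\<^sup>2 / 2"
proof -
  have "0 \<le> K"
    using assms(1) norm_ge_zero order_trans by blast
  have zh: "\<bar>z \<bullet> h\<bar> \<le> K * norm h"
    using Cauchy_Schwarz_ineq2[of z h] mult_right_mono[OF assms(1) norm_ge_zero[of h]] by linarith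
  then have "(z \<bullet> h)\<^sup>2 \<le> K\<^sup>2 * (norm h)\<^sup>2"
    using \<open>0 \<le> K\<close> by (simp add: abs_le_square_iff[symmetric] power_mult_distrib[symmetric])
  then have bound: "exp T * (z \<bullet> h)\<^sup>2 \<le> exp T * (K\<^sup>2 * (norm h)\<^sup>2)"
    by simp
  have "(gauss (z + h) + gauss (z - h)) / (2 * gauss z) = exp (- ((norm h)\<^sup>2 / 2)) * cosh (z \<bullet> h)"
    unfolding gauss_add_plus_gauss_diff using gauss_pos[of z] by simp
  then have "\<bar>(gauss (z + h) + gauss (z - h)) / (2 * gauss z) - 1\<bar> \<le> exp T * (z \<bullet> h)\<^sup>2 / 2 + (norm h)\<^sup>2 / 2"
    using zh assms(2) by (simp add: abs_exp_neg_mult_cosh_sub_one_le)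
  also have "\<dots> \<le> (exp T * K\<^sup>2 + 1) * (norm h)\<^sup>2 / 2"
    using bound by (simp add: field_simps)
  finally show ?thesis .
qed

definition mixture_density :: "'a::euclidean_space \<Rightarrow> 'a \<Rightarrow> real" where
  "mixture_density m y = gauss y / 2 + gauss (y - m) / 2"

lemma design_measure_eq_density: "design_measure m = density lborel (mixture_density m)"
  unfolding design_measure_def mixture_density_def ..

lemma mixture_density_pos: "0 < mixture_density m y"
  unfolding mixture_density_def using gauss_pos[of y] gauss_pos[of "y - m"] by simp

lemma eta_mult_mixture_density: "eta m y * mixture_density m y = gauss y / 2"
  unfolding eta_def mixture_density_def using gauss_pos[of y] gauss_pos[of "y - m"]
  by (simp add: field_simps)

lemma continuous_on_gauss: "continuous_on UNIV (gauss :: 'a::euclidean_space \<Rightarrow> real)"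
  unfolding gauss_def[abs_def] by (intro continuous_intros) auto

lemma continuous_on_mixture_density: "continuous_on UNIV (mixture_density m)"
  unfolding mixture_density_def[abs_def]
  by (intro continuous_intros continuous_on_compose2[OF continuous_on_gauss]) auto

lemma continuous_on_eta: "continuous_on UNIV (eta m)"
proof -
  have "gauss y + gauss (y - m) \<noteq> 0" for y
    using gauss_pos[of y] gauss_pos[of "y - m"] by linarith
  then show ?thesis
    unfolding eta_def[abs_def]
    by (intro continuous_intros continuous_on_gauss continuous_on_compose2[OF continuous_on_gauss]) auto
qed

lemma integrable_indicator_ball_mult:
  fixes F :: "'a::euclidean_space \<Rightarrow> real"
  assumes "continuous_on UNIV F"
  shows "integrable lborel (\<lambda>y. indicator (ball x r) y * F y)"
proof -
  have "set_integrable lborel (cball x r) F"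
    unfolding set_integrable_def
    by (rule borel_integrable_compact) (use assms continuous_on_subset in auto)
  then have "set_integrable lborel (ball x r) F"
    by (rule set_integrable_subset) auto
  then show ?thesis
    unfolding set_integrable_def by simp
qed

lemma integral_indicator_ball_reflect:
  fixes F :: "'a::euclidean_space \<Rightarrow> real"
  assumes [measurable]: "F \<in> borel_measurable borel"
  shows "(\<integral>y. indicator (ball x r) y * F y \<partial>lborel)
       = (\<integral>y. indicator (ball x r) y * F (2 *\<^sub>R x - y) \<partial>lborel)"
proof -
  have "lborel = distr lborel borel (\<lambda>y::'a. 2 *\<^sub>R x + (-1) *\<^sub>R y)"
    by (subst lborel_affine[of "-1" "2 *\<^sub>R x"]) (simp_all add: density_1)
  then have "(\<integral>y. indicator (ball x r) y * F y \<partial>lborel)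
     = (\<integral>y. indicator (ball x r) y * F y \<partial>distr lborel borel (\<lambda>y::'a. 2 *\<^sub>R x + (-1) *\<^sub>R y))"
    by simp
  also have "\<dots> = (\<integral>y. indicator (ball x r) (2 *\<^sub>R x - y) * F (2 *\<^sub>R x - y) \<partial>lborel)"
    by (subst integral_distr) (auto intro!: borel_measurable_times borel_measurable_indicator)
  also have "\<dots> = (\<integral>y. indicator (ball x r) y * F (2 *\<^sub>R x - y) \<partial>lborel)"
  proof -
    have "dist x (2 *\<^sub>R x - y) = dist x y" for y
      unfolding dist_norm by (simp add: scaleR_2 norm_minus_commute)
    then show ?thesis
      by (simp add: indicator_def mem_ball)
  qed
  finally show ?thesis .
qed

lemma abs_integral_ball_le_symmetric_sum:
  fixes F :: "'a::euclidean_space \<Rightarrow> real"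
  assumes "continuous_on UNIV F"
    and "\<And>h. norm h < r \<Longrightarrow> \<bar>F (x + h) + F (x - h)\<bar> \<le> C"
  shows "\<bar>\<integral>y. indicator (ball x r) y * F y \<partial>lborel\<bar> \<le> C / 2 * measure lborel (ball x r)"
proof -
  let ?B = "ball x r"
  have [measurable]: "F \<in> borel_measurable borel"
    using assms(1) by (rule borel_measurable_continuous_onI)
  have "continuous_on UNIV (\<lambda>y. F (2 *\<^sub>R x - y))"
    by (rule continuous_on_compose2[OF assms(1)]) (auto intro: continuous_intros)
  then have int: "integrable lborel (\<lambda>y. indicator ?B y * F (2 *\<^sub>R x - y))"
    by (rule integrable_indicator_ball_mult)
  have "2 * (\<integral>y. indicator ?B y * F y \<partial>lborel)
      = (\<integral>y. indicator ?B y * F y \<partial>lborel) + (\<integral>y. indicator ?B y * F (2 *\<^sub>R x - y) \<partial>lborel)"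
    using integral_indicator_ball_reflect[of F x r] by simp
  also have "\<dots> = (\<integral>y. indicator ?B y * (F y + F (2 *\<^sub>R x - y)) \<partial>lborel)"
    using integrable_indicator_ball_mult[OF assms(1)] int
    by (simp add: distrib_left)
  also have "\<bar>\<dots>\<bar> \<le> (\<integral>y. indicator ?B y * C \<partial>lborel)"
  proof (rule integral_abs_bound_integral)
    show "integrable lborel (\<lambda>y. indicator ?B y * (F y + F (2 *\<^sub>R x - y)))"
      using integrable_indicator_ball_mult[OF assms(1)] int
      by (simp add: distrib_left)
    show "integrable lborel (\<lambda>y. indicator ?B y * C)"
      by (rule integrable_indicator_ball_mult) simp
    show "\<bar>indicator ?B y * (F y + F (2 *\<^sub>R x - y))\<bar> \<le> indicator ?B y * C" for y
    proof (cases "y \<in> ?B")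
      case True
      then have "norm (y - x) < r"
        by (simp add: dist_norm norm_minus_commute)
      from assms(2)[OF this] show ?thesis
        using True by (simp add: scaleR_2 algebra_simps)
    qed simp
  qed
  also have "\<dots> = C * measure lborel ?B"
    by simp
  finally show ?thesis
    by simp
qed

lemma integral_design_measure:
  assumes [measurable]: "A \<in> sets borel" "g \<in> borel_measurable borel"
  shows "(\<integral>y\<in>A. g y \<partial>design_measure m) = (\<integral>y. indicator A y * (g y * mixture_density m y) \<partial>lborel)"
proof -
  have [measurable]: "mixture_density m \<in> borel_measurable borel"
    using continuous_on_mixture_density by (rule borel_measurable_continuous_onI)
  have "(\<integral>y\<in>A. g y \<partial>design_measure m)
      = (\<integral>y. mixture_density m y *\<^sub>R (indicator A y *\<^sub>R g y) \<partial>lborel)"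
    unfolding set_lebesgue_integral_def design_measure_eq_density
    by (rule integral_density) (auto simp: less_imp_le[OF mixture_density_pos])
  then show ?thesis
    by (simp add: mult_ac)
qed

lemma measure_design_measure_ball:
  "measure (design_measure m) (ball x r) = (\<integral>y. indicator (ball x r) y * mixture_density m y \<partial>lborel)"
proof -
  have [measurable]: "mixture_density m \<in> borel_measurable borel"
    using continuous_on_mixture_density by (rule borel_measurable_continuous_onI)
  have "measure (design_measure m) (ball x r) = integral\<^sup>L (density lborel (mixture_density m)) (indicator (ball x r))"
    unfolding design_measure_eq_density by simp
  also have "\<dots> = (\<integral>y. mixture_density m y *\<^sub>R indicator (ball x r) y \<partial>lborel)"
    by (rule integral_density) (auto simp: less_imp_le[OF mixture_density_pos] intro!: borel_measurable_indicator)
  finally show ?thesis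
    by (simp add: mult.commute)
qed

lemma eta_ball_sub_eta:
  assumes "measure (design_measure m) (ball x r) \<noteq> 0"
  shows "eta_ball m x r - eta m x
    = (\<integral>y. indicator (ball x r) y * ((eta m y - eta m x) * mixture_density m y) \<partial>lborel)
      / measure (design_measure m) (ball x r)"
proof -
  let ?B = "ball x r" and ?f = "mixture_density m"
  have [measurable]: "eta m \<in> borel_measurable borel"
    using continuous_on_eta by (rule borel_measurable_continuous_onI)
  have int_eta: "integrable lborel (\<lambda>y. indicator ?B y * (eta m y * ?f y))"
    by (intro integrable_indicator_ball_mult continuous_intros continuous_on_eta continuous_on_mixture_density)
  have int_f: "integrable lborel (\<lambda>y. eta m x * (indicator ?B y * ?f y))"
    by (intro integrable_mult_right integrable_indicator_ball_mult continuous_on_mixture_density)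
  have "(\<integral>y. indicator ?B y * ((eta m y - eta m x) * ?f y) \<partial>lborel)
      = (\<integral>y. indicator ?B y * (eta m y * ?f y) - eta m x * (indicator ?B y * ?f y) \<partial>lborel)"
    by (simp add: algebra_simps)
  also have "\<dots> = (\<integral>y\<in>?B. eta m y \<partial>design_measure m) - eta m x * measure (design_measure m) ?B"
    using int_eta int_f
    by (simp add: integral_design_measure measure_design_measure_ball)
  finally show ?thesis
    unfolding eta_ball_def using assms by (simp add: field_simps)
qed

lemma measure_design_measure_ball_ge:
  fixes x :: "'a::euclidean_space"
  assumes "norm x + r \<le> \<rho>"
  shows "(2 * pi) powr (- real DIM('a) / 2) / 2 * exp (- \<rho>\<^sup>2 / 2) * measure lborel (ball x r)
    \<le> measure (design_measure m) (ball x r)"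
proof -
  let ?c = "(2 * pi) powr (- real DIM('a) / 2) / 2 * exp (- \<rho>\<^sup>2 / 2)"
  have "?c * measure lborel (ball x r) = (\<integral>y. indicator (ball x r) y * ?c \<partial>lborel)"
    by simp
  also have "\<dots> \<le> (\<integral>y. indicator (ball x r) y * mixture_density m y \<partial>lborel)"
  proof (rule integral_mono)
    show "integrable lborel (\<lambda>y. indicator (ball x r) y * ?c)"
      by (rule integrable_indicator_ball_mult) simp
    show "integrable lborel (\<lambda>y. indicator (ball x r) y * mixture_density m y)"
      by (rule integrable_indicator_ball_mult[OF continuous_on_mixture_density])
    show "indicator (ball x r) y * ?c \<le> indicator (ball x r) y * mixture_density m y" for y
    proof (cases "y \<in> ball x r")
      case True
      then have "norm y \<le> \<rho>"
        using assms norm_triangle_sub[of y x] by (simp add: dist_norm norm_minus_commute)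
      then have "?c \<le> gauss y / 2"
        using gauss_ge[of y \<rho>] by simp
      also have "\<dots> \<le> mixture_density m y"
        unfolding mixture_density_def using gauss_pos[of "y - m"] by simp
      finally show ?thesis
        using True by simp
    qed simp
  qed
  also have "\<dots> = measure (design_measure m) (ball x r)"
    by (rule measure_design_measure_ball[symmetric])
  finally show ?thesis .
qed

lemma eta_second_difference_le:
  fixes x h m :: "'a::euclidean_space"
  assumes "norm x \<le> K" "norm (x - m) \<le> K" "K * norm h \<le> T"
  shows "\<bar>(eta m (x + h) - eta m x) * mixture_density m (x + h)
          + (eta m (x - h) - eta m x) * mixture_density m (x - h)\<bar>
    \<le> (2 * pi) powr (- real DIM('a) / 2) * (exp T * K\<^sup>2 + 1) * (norm h)\<^sup>2"
proof -
  define gx gm where "gx = gauss x" and "gm = gauss (x - m)"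
  define \<rho>x \<rho>m
    where "\<rho>x = (gauss (x + h) + gauss (x - h)) / (2 * gx)"
      and "\<rho>m = (gauss ((x - m) + h) + gauss ((x - m) - h)) / (2 * gm)"
  define A where "A = gx * gm / (gx + gm)"
  have gxp: "0 < gx" and gmp: "0 < gm"
    unfolding gx_def gm_def by (simp_all add: gauss_pos)
  have eta_x: "eta m x = gx / (gx + gm)"
    unfolding eta_def gx_def gm_def ..
  have "(eta m (x + h) - eta m x) * mixture_density m (x + h)
          + (eta m (x - h) - eta m x) * mixture_density m (x - h)
        = (1 - eta m x) * gx * \<rho>x - eta m x * gm * \<rho>m"
    unfolding left_diff_distrib eta_mult_mixture_density \<rho>x_def \<rho>m_def
    using gxp gmp by (simp add: mixture_density_def field_simps)
  also have "\<dots> = A * ((\<rho>x - 1) - (\<rho>m - 1))"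
  proof -
    \<comment> \<open>Both Gaussians enter with the same weight, so the constant terms of the two ratios cancel.\<close>
    have weights: "(1 - eta m x) * gx = A" "eta m x * gm = A"
      unfolding eta_x A_def using gxp gmp by (simp_all add: field_simps)
    show ?thesis
      unfolding weights by (simp add: algebra_simps)
  qed
  finally have eq: "(eta m (x + h) - eta m x) * mixture_density m (x + h)
          + (eta m (x - h) - eta m x) * mixture_density m (x - h) = A * ((\<rho>x - 1) - (\<rho>m - 1))" .
  have "\<bar>(\<rho>x - 1) - (\<rho>m - 1)\<bar> \<le> \<bar>\<rho>x - 1\<bar> + \<bar>\<rho>m - 1\<bar>"
    by (rule abs_triangle_ineq4)
  also have "\<dots> \<le> (exp T * K\<^sup>2 + 1) * (norm h)\<^sup>2 / 2 + (exp T * K\<^sup>2 + 1) * (norm h)\<^sup>2 / 2"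
    unfolding \<rho>x_def \<rho>m_def gx_def gm_def
    by (intro add_mono gauss_symmetric_ratio_le[OF assms(1,3)] gauss_symmetric_ratio_le[OF assms(2,3)])
  finally have "\<bar>(\<rho>x - 1) - (\<rho>m - 1)\<bar> \<le> (exp T * K\<^sup>2 + 1) * (norm h)\<^sup>2"
    by (simp only: field_sum_of_halves)
  moreover have "0 \<le> A" "A \<le> gx"
    unfolding A_def using gxp gmp by (simp_all add: field_simps)
  moreover have "gx \<le> (2 * pi) powr (- real DIM('a) / 2)"
    unfolding gx_def by (rule gauss_le)
  ultimately show ?thesis
    unfolding eq abs_mult by (simp add: mult.assoc mult_mono)
qed

lemma abs_eta_ball_sub_eta_le:
  fixes x m :: "'a::euclidean_space"
  assumes "0 < r" "norm x + r \<le> \<rho>" "norm x \<le> K" "norm (x - m) \<le> K" "K * r \<le> T"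
  shows "\<bar>eta_ball m x r - eta m x\<bar> \<le> (exp T * K\<^sup>2 + 1) * exp (\<rho>\<^sup>2 / 2) * r\<^sup>2"
proof -
  define c0 where "c0 = (2 * pi) powr (- real DIM('a) / 2)"
  define C where "C = exp T * K\<^sup>2 + 1"
  define V where "V = measure lborel (ball x r)"
  define \<mu> where "\<mu> = measure (design_measure m) (ball x r)"
  define I where "I = (\<integral>y. indicator (ball x r) y * ((eta m y - eta m x) * mixture_density m y) \<partial>lborel)"
  have "0 < c0" "0 < V"
    unfolding c0_def V_def using assms(1) by (simp_all add: content_ball_pos)
  have "0 < C"
    unfolding C_def by (intro add_nonneg_pos mult_nonneg_nonneg) auto
  have \<mu>_ge: "c0 / 2 * exp (- \<rho>\<^sup>2 / 2) * V \<le> \<mu>"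
    unfolding c0_def V_def \<mu>_def by (rule measure_design_measure_ball_ge[OF assms(2)])
  have "0 < c0 / 2 * exp (- \<rho>\<^sup>2 / 2) * V"
    using \<open>0 < c0\<close> \<open>0 < V\<close> by simp
  then have "0 < \<mu>"
    using \<mu>_ge by linarith
  have "0 \<le> K"
    using assms(3) norm_ge_zero order_trans by blast
  have I_le: "\<bar>I\<bar> \<le> c0 * C * r\<^sup>2 / 2 * V"
    unfolding I_def V_def
  proof (rule abs_integral_ball_le_symmetric_sum)
    show "continuous_on UNIV (\<lambda>y. (eta m y - eta m x) * mixture_density m y)"
      by (intro continuous_intros continuous_on_eta continuous_on_mixture_density)
    fix h :: 'a
    assume "norm h < r"
    then have "K * norm h \<le> K * r"
      using \<open>0 \<le> K\<close> by (intro mult_left_mono) auto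
    then have "K * norm h \<le> T"
      using assms(5) by linarith
    then have "\<bar>(eta m (x + h) - eta m x) * mixture_density m (x + h)
          + (eta m (x - h) - eta m x) * mixture_density m (x - h)\<bar> \<le> c0 * C * (norm h)\<^sup>2"
      unfolding c0_def C_def by (rule eta_second_difference_le[OF assms(3,4)])
    also have "\<dots> \<le> c0 * C * r\<^sup>2"
    proof (rule mult_left_mono)
      show "(norm h)\<^sup>2 \<le> r\<^sup>2"
        using \<open>norm h < r\<close> by (intro power_mono) simp_all
      show "0 \<le> c0 * C"
        using \<open>0 < c0\<close> \<open>0 < C\<close> by simp
    qed
    finally show "\<bar>(eta m (x + h) - eta m x) * mixture_density m (x + h)
          + (eta m (x - h) - eta m x) * mixture_density m (x - h)\<bar> \<le> c0 * C * r\<^sup>2" .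
  qed
  have "eta_ball m x r - eta m x = I / \<mu>"
    unfolding I_def \<mu>_def by (rule eta_ball_sub_eta) (use \<open>0 < \<mu>\<close> \<mu>_def in simp)
  then have "\<bar>eta_ball m x r - eta m x\<bar> = \<bar>I\<bar> / \<mu>"
    using \<open>0 < \<mu>\<close> by simp
  also have "\<dots> \<le> (c0 * C * r\<^sup>2 / 2 * V) / (c0 / 2 * exp (- \<rho>\<^sup>2 / 2) * V)"
    using I_le \<mu>_ge \<open>0 < c0\<close> \<open>0 < C\<close> \<open>0 < V\<close> \<open>0 < c0 / 2 * exp (- \<rho>\<^sup>2 / 2) * V\<close>
    by (intro frac_le) simp_all
  also have "\<dots> = C * exp (\<rho>\<^sup>2 / 2) * r\<^sup>2"
    using \<open>0 < c0\<close> \<open>0 < V\<close> by (simp add: exp_minus field_simps)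
  finally show ?thesis
    unfolding C_def .
qed

lemma powr_mult_square_le:
  fixes c r \<mu> :: real and n :: nat
  assumes "0 < n" "0 \<le> c" "0 < r" "c * r ^ n \<le> \<mu>"
  shows "c powr (2 / n) * r\<^sup>2 \<le> \<mu> powr (2 / n)"
proof -
  have "(r ^ n) powr (2 / n) = r powr (real n * (2 / n))"
    using assms(3) by (simp add: powr_realpow[symmetric] powr_powr del: powr_realpow)
  also have "\<dots> = r\<^sup>2"
    using assms(1,3) by (simp add: powr_numeral)
  finally have "(r ^ n) powr (2 / n) = r\<^sup>2" .
  then have "c powr (2 / n) * r\<^sup>2 = (c * r ^ n) powr (2 / n)"
    using assms(2,3) by (simp add: powr_mult)
  also have "\<dots> \<le> \<mu> powr (2 / n)"
    using assms by (intro powr_mono2) auto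
  finally show ?thesis .
qed

lemma powr_measure_design_measure_ball_ge:
  fixes x :: "'a::euclidean_space"
  assumes "0 < r" "norm x + r \<le> \<rho>"
  shows "((2 * pi) powr (- real DIM('a) / 2) / 2 * exp (- \<rho>\<^sup>2 / 2) * measure lborel (ball (0::'a) 1))
           powr (2 / DIM('a)) * r\<^sup>2
    \<le> measure (design_measure m) (ball x r) powr (2 / DIM('a))"
proof (rule powr_mult_square_le)
  show "(2 * pi) powr (- real DIM('a) / 2) / 2 * exp (- \<rho>\<^sup>2 / 2) * measure lborel (ball (0::'a) 1)
          * r ^ DIM('a) \<le> measure (design_measure m) (ball x r)"
    using measure_design_measure_ball_ge[OF assms(2), of m]
    unfolding content_ball_conv_unit_ball[OF less_imp_le[OF assms(1)]] by (simp add: mult_ac)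
qed (use assms(1) in \<open>simp_all add: content_ball_pos\<close>)

theorem proposition2:
  fixes m :: "'a::euclidean_space" and R :: real
  assumes "R > 0"
  shows "\<exists>L. \<forall>x::'a. \<forall>r::real. norm x \<le> R \<longrightarrow> 0 < r \<longrightarrow> r \<le> 1 / R \<longrightarrow>
           \<bar>eta_ball m x r - eta m x\<bar> \<le>
             L * (measure (design_measure m) (ball x r)) powr (2 / real DIM('a))"
proof -
  define \<rho> where "\<rho> = R + 1 / R"
  define K where "K = R + norm m"
  define c where "c = (2 * pi) powr (- real DIM('a) / 2) / 2 * exp (- \<rho>\<^sup>2 / 2) * measure lborel (ball (0::'a) 1)"
  define L where "L = (exp (K / R) * K\<^sup>2 + 1) * exp (\<rho>\<^sup>2 / 2) / c powr (2 / DIM('a))"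
  have "0 < c"
    unfolding c_def by (simp add: content_ball_pos)
  show ?thesis
  proof (intro exI[of _ L] allI impI)
    fix x :: 'a and r :: real
    assume x: "norm x \<le> R" and r: "0 < r" "r \<le> 1 / R"
    have "norm x + r \<le> \<rho>"
      unfolding \<rho>_def using x r(2) by (rule add_mono)
    moreover have "norm x \<le> K" "norm (x - m) \<le> K"
      unfolding K_def using x norm_triangle_ineq4[of x m] norm_ge_zero[of m] by linarith+
    moreover have "K * r \<le> K / R"
      using mult_left_mono[OF r(2), of K] \<open>norm x \<le> K\<close> norm_ge_zero[of x] by simp
    ultimately have "\<bar>eta_ball m x r - eta m x\<bar> \<le> (exp (K / R) * K\<^sup>2 + 1) * exp (\<rho>\<^sup>2 / 2) * r\<^sup>2"
      using r(1) by (intro abs_eta_ball_sub_eta_le)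
    also have "\<dots> = L * (c powr (2 / DIM('a)) * r\<^sup>2)"
      unfolding L_def using \<open>0 < c\<close> by simp
    also have "\<dots> \<le> L * measure (design_measure m) (ball x r) powr (2 / DIM('a))"
      unfolding c_def using r(1) \<open>norm x + r \<le> \<rho>\<close> \<open>0 < c\<close>
      by (intro mult_left_mono powr_measure_design_measure_ball_ge) (simp_all add: L_def)
    finally show "\<bar>eta_ball m x r - eta m x\<bar> \<le> L * measure (design_measure m) (ball x r) powr (2 / DIM('a))" .
  qed
qed

end
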